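(* Let $f,g:[a,b]\to\mathbb{R}$, $a<b$, be convex functions such that $f$, $g$, $fg$ are integrable on $[a,b]$. Then \begin{align*} &\frac{g(b)}{(b-a)^2}\int_a^b (x-a)f(x)\,dx+\frac{g(a)}{(b-a)^2}\int_a^b (b-x)f(x)\,dx+\frac{f(b)}{(b-a)^2}\int_a^b (x-a)g(x)\,dx+\frac{f(a)}{(b-a)^2}\int_a^b (b-x)g(x)\,dx\\ &\le \frac{1}{b-a}\int_a^b f(x)g(x)\,dx+\frac13 M(a,b)+\frac16 N(a,b), \end{align*} where $M(a,b)=f(a)g(a)+f(b)g(b)$ and $N(a,b)=f(a)g(b)+f(b)g(a)$. *)

theory Defs
  imports "HOL-Analysis.Analysis"
begin

end

theory Submission
  imports Defs
begin

(* For a < b let  chord a b u v  be the affine function on [a,b] taking the values u at a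
   and v at b.  A convex f lies below its chord  Lf = chord a b (f a) (f b),  and likewise
   g \<le> Lg, hence pointwise  (Lf - f) * (Lg - g) \<ge> 0,  i.e.
       f * Lg + g * Lf \<le> f * g + Lf * Lg.
   Integrating over [a,b] gives the theorem after dividing by b - a:
     - the integral of f * Lg is a combination of the weighted integrals of (x-a) f(x)
       and (b-x) f(x) (lemma has_integral_times_chord);
     - the integral of Lf * Lg is (b - a) (M(a,b)/3 + N(a,b)/6) (lemma has_integral_chord_product).
   The weighted integrals exist because f is integrable and dominated by a continuous
   function (lemma integrable_continuous_mult_dominated). *)

definition chord :: "real \<Rightarrow> real \<Rightarrow> real \<Rightarrow> real \<Rightarrow> real \<Rightarrow> real" where
  "chord a b u v x = ((b - x) * u + (x - a) * v) / (b - a)"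

lemma continuous_on_chord: "continuous_on S (chord a b u v)"
  unfolding chord_def divide_inverse by (intro continuous_intros)

lemma convex_on_le_chord:
  fixes f :: "real \<Rightarrow> real"
  assumes "a < b" and "convex_on {a..b} f" and "x \<in> {a..b}"
  shows "f x \<le> chord a b (f a) (f b) x"
proof -
  have "f x \<le> (f b - f a) / (b - a) * (x - a) + f a"
    using convex_onD_Icc'[OF assms(2,3)] by simp
  also have "\<dots> = chord a b (f a) (f b) x"
    using assms(1) by (simp add: chord_def field_simps)
  finally show ?thesis .
qed

(* An integrable function dominated from above by a continuous one stays integrable after
   multiplication by a continuous weight: l - f is nonnegative, hence absolutely integrable,
   and bounded measurable multipliers preserve absolute integrability. *)
lemma integrable_continuous_mult_dominated:
  fixes f l w :: "real \<Rightarrow> real"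
  assumes f: "f integrable_on {a..b}" and l: "continuous_on {a..b} l"
    and le: "\<And>x. x \<in> {a..b} \<Longrightarrow> f x \<le> l x" and w: "continuous_on {a..b} w"
  shows "(\<lambda>x. w x * f x) integrable_on {a..b}"
proof -
  have "(\<lambda>x. l x - f x) integrable_on {a..b}"
    using integrable_continuous_real[OF l] f by (rule integrable_diff)
  then have gap: "(\<lambda>x. l x - f x) absolutely_integrable_on {a..b}"
    by (rule nonnegative_absolutely_integrable_1) (use le in auto)
  have "w \<in> borel_measurable (lebesgue_on {a..b})"
    using w by (intro continuous_imp_measurable_on_sets_lebesgue) auto
  moreover have "bounded (w ` {a..b})"
    using w compact_continuous_image compact_imp_bounded by blast
  ultimately have "(\<lambda>x. w x * (l x - f x)) absolutely_integrable_on {a..b}"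
    by (intro absolutely_integrable_bounded_measurable_product_real[OF _ _ _ gap]) auto
  then have "(\<lambda>x. w x * (l x - f x)) integrable_on {a..b}"
    using absolutely_integrable_on_def by blast
  moreover have "(\<lambda>x. w x * l x) integrable_on {a..b}"
    by (intro integrable_continuous_real continuous_intros w l)
  ultimately have "(\<lambda>x. w x * l x - w x * (l x - f x)) integrable_on {a..b}"
    by (intro integrable_diff)
  then show ?thesis by (simp add: algebra_simps)
qed

lemma convex_on_integrable_weighted:
  fixes f w :: "real \<Rightarrow> real"
  assumes "a < b" and "convex_on {a..b} f" and "f integrable_on {a..b}"
    and "continuous_on {a..b} w"
  shows "(\<lambda>x. w x * f x) integrable_on {a..b}"
  using assms(3) continuous_on_chord convex_on_le_chord[OF assms(1,2)] assms(4)
  by (rule integrable_continuous_mult_dominated)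

lemma has_integral_times_chord:
  fixes f :: "real \<Rightarrow> real"
  assumes "(\<lambda>x. (b - x) * f x) integrable_on {a..b}"
    and "(\<lambda>x. (x - a) * f x) integrable_on {a..b}"
  shows "((\<lambda>x. f x * chord a b u v x) has_integral
      (u * integral {a..b} (\<lambda>x. (b - x) * f x) + v * integral {a..b} (\<lambda>x. (x - a) * f x))
        / (b - a)) {a..b}"
proof -
  have "((\<lambda>x. (u * ((b - x) * f x) + v * ((x - a) * f x)) / (b - a)) has_integral
      (u * integral {a..b} (\<lambda>x. (b - x) * f x) + v * integral {a..b} (\<lambda>x. (x - a) * f x))
        / (b - a)) {a..b}"
    using assms by (intro has_integral_divide has_integral_add has_integral_mult_right
        integrable_integral)
  moreover have "(u * ((b - x) * f x) + v * ((x - a) * f x)) / (b - a) = f x * chord a b u v x"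
    for x by (simp add: chord_def algebra_simps)
  ultimately show ?thesis by simp
qed

lemma has_integral_chord_product:
  fixes a b u v r s :: real
  assumes "a < b"
  shows "((\<lambda>x. chord a b u v x * chord a b r s x) has_integral
      (b - a) * ((u * r + v * s) / 3 + (u * s + v * r) / 6)) {a..b}"
proof -
  define N where "N x = ((b - x) * u + (x - a) * v) * ((b - x) * r + (x - a) * s)" for x
  define H where "H x = u * r * ((x - b)^3 / 3) + v * s * ((x - a)^3 / 3)
      + (u * s + v * r) * ((a + b) * x^2 / 2 - a * b * x - x^3 / 3)" for x
  have "(N has_integral (H b - H a)) {a..b}"
    using assms unfolding H_def N_def
    by (intro fundamental_theorem_of_calculus)
      (auto intro!: derivative_eq_intros simp: power2_eq_square power3_eq_cube field_simps)
  moreover have "H b - H a = (b - a)^3 * ((u * r + v * s) / 3 + (u * s + v * r) / 6)"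
    unfolding H_def by (simp add: power2_eq_square power3_eq_cube field_simps)
  ultimately have "((\<lambda>x. N x / (b - a)^2) has_integral
      (b - a)^3 * ((u * r + v * s) / 3 + (u * s + v * r) / 6) / (b - a)^2) {a..b}"
    by (intro has_integral_divide) simp
  moreover have "N x / (b - a)^2 = chord a b u v x * chord a b r s x" for x
    unfolding N_def chord_def by (simp add: power2_eq_square)
  moreover have "(b - a)^3 * c / (b - a)^2 = (b - a) * c" for c
    using assms by (simp add: power2_eq_square power3_eq_cube)
  ultimately show ?thesis by simp
qed

lemma cross_products_le:
  fixes x y X Y :: real
  assumes "x \<le> X" and "y \<le> Y"
  shows "x * Y + y * X \<le> x * y + X * Y"
proof -
  have "0 \<le> (X - x) * (Y - y)" using assms by simp
  then show ?thesis by (simp add: algebra_simps)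
qed

theorem corollary2:
  fixes f g :: "real \<Rightarrow> real" and a b :: real
  assumes "a < b"
    and "convex_on {a..b} f" and "convex_on {a..b} g"
    and "f integrable_on {a..b}" and "g integrable_on {a..b}"
    and "(\<lambda>x. f x * g x) integrable_on {a..b}"
  shows "g b / (b - a)^2 * integral {a..b} (\<lambda>x. (x - a) * f x)
       + g a / (b - a)^2 * integral {a..b} (\<lambda>x. (b - x) * f x)
       + f b / (b - a)^2 * integral {a..b} (\<lambda>x. (x - a) * g x)
       + f a / (b - a)^2 * integral {a..b} (\<lambda>x. (b - x) * g x)
     \<le> 1 / (b - a) * integral {a..b} (\<lambda>x. f x * g x)
       + 1/3 * (f a * g a + f b * g b) + 1/6 * (f a * g b + f b * g a)"
proof -
  note ab = \<open>a < b\<close>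
  define Lf where "Lf = chord a b (f a) (f b)"
  define Lg where "Lg = chord a b (g a) (g b)"
  define P Q R S where "P = integral {a..b} (\<lambda>x. (x - a) * f x)"
    and "Q = integral {a..b} (\<lambda>x. (b - x) * f x)"
    and "R = integral {a..b} (\<lambda>x. (x - a) * g x)"
    and "S = integral {a..b} (\<lambda>x. (b - x) * g x)"
  define I where "I = integral {a..b} (\<lambda>x. f x * g x)"
  have weighted: "(\<lambda>x. w x * h x) integrable_on {a..b}"
    if "h = f \<or> h = g" and "continuous_on {a..b} w" for h w
    using that assms convex_on_integrable_weighted[OF ab] by blast
  have "((\<lambda>x. f x * Lg x + g x * Lf x) has_integral
      (g a * Q + g b * P) / (b - a) + (f a * S + f b * R) / (b - a)) {a..b}"
    unfolding Lf_def Lg_def P_def Q_def R_def S_def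
    by (intro has_integral_add has_integral_times_chord weighted) (auto intro!: continuous_intros)
  moreover have "((\<lambda>x. f x * g x + Lf x * Lg x) has_integral
      I + (b - a) * ((f a * g a + f b * g b) / 3 + (f a * g b + f b * g a) / 6)) {a..b}"
    unfolding Lf_def Lg_def I_def
    using assms(6) by (intro has_integral_add has_integral_chord_product[OF ab] integrable_integral)
  moreover have "f x * Lg x + g x * Lf x \<le> f x * g x + Lf x * Lg x" if "x \<in> {a..b}" for x
    using convex_on_le_chord[OF ab assms(2) that] convex_on_le_chord[OF ab assms(3) that]
    unfolding Lf_def Lg_def by (rule cross_products_le)
  ultimately have "(g a * Q + g b * P) / (b - a) + (f a * S + f b * R) / (b - a)
      \<le> I + (b - a) * ((f a * g a + f b * g b) / 3 + (f a * g b + f b * g a) / 6)"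
    by (rule has_integral_le)
  then have "((g a * Q + g b * P) / (b - a) + (f a * S + f b * R) / (b - a)) / (b - a)
      \<le> (I + (b - a) * ((f a * g a + f b * g b) / 3 + (f a * g b + f b * g a) / 6)) / (b - a)"
    using ab by (simp add: divide_right_mono)
  moreover have "((g a * Q + g b * P) / (b - a) + (f a * S + f b * R) / (b - a)) / (b - a)
      = g b / (b - a)^2 * P + g a / (b - a)^2 * Q + f b / (b - a)^2 * R + f a / (b - a)^2 * S"
    by (simp add: power2_eq_square add_divide_distrib algebra_simps)
  moreover have "(I + (b - a) * ((f a * g a + f b * g b) / 3 + (f a * g b + f b * g a) / 6)) / (b - a)
      = 1 / (b - a) * I + 1/3 * (f a * g a + f b * g b) + 1/6 * (f a * g b + f b * g a)"
    using ab by (simp add: add_divide_distrib)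
  ultimately show ?thesis unfolding P_def Q_def R_def S_def I_def by simp
qed

end
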